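(* Let $\mathbf X\in\mathbb R^{n\times p}$ be a fixed matrix with $p<n$, let $\mathbf P$ be the orthogonal projection onto its column space, and let $\mathbf X_{\mathrm{all}}\in\mathbb R^{n\times p_{\mathrm{all}}}$ be a fixed matrix. Suppose $\mathbf y=\mathbf X\boldsymbol\beta+\sigma\boldsymbol\varepsilon$ with $\boldsymbol\beta\in\mathbb R^p$, $\sigma>0$ and $\boldsymbol\varepsilon\sim\mathcal N_n(\mathbf 0,\mathbf I)$ (the null hypothesis). Let $\hat{\mathbf R}^{(0)}=(\mathbf I-\mathbf P)\mathbf y/\|(\mathbf I-\mathbf P)\mathbf y\|_2$, and for $b=1,\dots,B$ let $\hat{\mathbf R}^{(b)}=(\mathbf I-\mathbf P)\boldsymbol\zeta^{(b)}/\|(\mathbf I-\mathbf P)\boldsymbol\zeta^{(b)}\|_2$, where $\boldsymbol\zeta^{(1)},\dots,\boldsymbol\zeta^{(B)}$ are i.i.d. $\mathcal N_n(\mathbf 0,\mathbf I)$, independent of $\boldsymbol\varepsilon$. Let $f_1,\dots,f_L:\mathbb R^n\times\mathbb R^{n\times p_{\mathrm{all}}}\to\mathbb R$ be measurable functions, set $f^{(b)}_l=f_l(\hat{\mathbf R}^{(b)},\mathbf X_{\mathrm{all}})$, $\mathbf f^{(b)}=(f^{(b)}_l)_{l=1}^L$, and let $\mathbf f^{(-b)}$ denote the collection $\{\mathbf f^{(b')}:b'\in\{0,\dots,B\},b'\neq b\}$ arranged as an $L\times B$ matrix. Let $\tilde Q:\mathbb R^L\times\mathbb R^{L\times B}\to\mathbb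 R$ be measurable and invariant under permutations of the columns of its second argument, and set $\tilde Q_b=\tilde Q(\mathbf f^{(b)},\mathbf f^{(-b)})$ for $b=0,\dots,B$. Define $$Q=\frac{1}{B+1}\Big(1+\sum_{b=1}^B\mathbb 1_{\{\tilde Q_b\ge\tilde Q_0\}}\Big).$$ Then $\mathbb P(Q\le x)\le x$ for all $x\in[0,1]$.
   Context: The functions $f_l$ are called residual prediction functions; $\tilde Q_b$ measures how extreme the $b$-th curve is relative to the others (larger = more extreme). *)

theory Defs
  imports "HOL-Probability.Probability"
begin

definition orth_proj :: "'a::euclidean_space set \<Rightarrow> 'a \<Rightarrow> 'a" where
  "orth_proj S y = (THE u. u \<in> S \<and> (\<forall>w\<in>S. (y - u) \<bullet> w = 0))"

definition colproj :: "real^'p^'n \<Rightarrow> real^'n \<Rightarrow> real^'n" where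
  "colproj X y = orth_proj (span (columns X)) y"

definition norm_resid :: "real^'p^'n \<Rightarrow> real^'n \<Rightarrow> real^'n" where
  "norm_resid X y = (1 / norm (y - colproj X y)) *\<^sub>R (y - colproj X y)"

text \<open>Index map enumerating {0..B} minus {b} by k < B (column k of f^(-b)).\<close>
definition skip_idx :: "nat \<Rightarrow> nat \<Rightarrow> nat" where
  "skip_idx b k = (if k < b then k else Suc k)"

end

theory Submission
  imports Defs
begin

text \<open>Under the null hypothesis the residual direction of y is that of \<epsilon>, whatever \<beta> and \<sigma>
  are, so Q~_0, ..., Q~_B are one fixed function of the i.i.d. standard Gaussian vectors
  \<epsilon>, \<zeta>^(1), ..., \<zeta>^(B), each time with a different vector singled out. Swapping \<epsilon> and \<zeta>^(b)
  preserves their joint law and, by the column symmetry of Q~, swaps Q~_0 and Q~_b; hence the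
  rank p-values of all B + 1 statistics have the same law. Pointwise, at most x (B + 1) of these
  p-values are \<le> x (the smallest statistic among those indices has all the others at or above it),
  so averaging over b gives P(Q \<le> x) \<le> x.\<close>

subsection \<open>Projection onto the column space\<close>

lemma orth_proj_eqI:
  fixes S :: "'a::euclidean_space set"
  assumes "subspace S" "u \<in> S" "\<And>w. w \<in> S \<Longrightarrow> (y - u) \<bullet> w = 0"
  shows "orth_proj S y = u"
  unfolding orth_proj_def
proof (rule the_equality)
  show "u \<in> S \<and> (\<forall>w\<in>S. (y - u) \<bullet> w = 0)" using assms(2,3) by blast
next
  fix v assume v: "v \<in> S \<and> (\<forall>w\<in>S. (y - v) \<bullet> w = 0)"
  have "u - v \<in> S" using assms v by (simp add: subspace_diff)
  then have "(y - v) \<bullet> (u - v) - (y - u) \<bullet> (u - v) = 0" using assms v by simp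
  then have "(u - v) \<bullet> (u - v) = 0" by (simp add: inner_diff_left)
  then show "v = u" by simp
qed

lemma orth_proj_span:
  fixes S :: "'a::euclidean_space set"
  shows "orth_proj (span S) y \<in> span S"
    and "w \<in> span S \<Longrightarrow> (y - orth_proj (span S) y) \<bullet> w = 0"
proof -
  obtain u z where u: "u \<in> span S" "\<And>w. w \<in> span S \<Longrightarrow> orthogonal z w" "y = u + z"
    using orthogonal_subspace_decomp_exists by blast
  have "orth_proj (span S) y = u"
    by (rule orth_proj_eqI) (use u in \<open>auto simp: orthogonal_def\<close>)
  then show "orth_proj (span S) y \<in> span S" "w \<in> span S \<Longrightarrow> (y - orth_proj (span S) y) \<bullet> w = 0"
    using u by (auto simp: orthogonal_def)
qed

lemma linear_colproj: "linear (colproj X)"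
proof (rule linearI)
  note P = orth_proj_span[where S = "columns X", folded colproj_def]
  fix a b
  show "colproj X (a + b) = colproj X a + colproj X b"
    unfolding colproj_def[of X "a + b"]
    by (rule orth_proj_eqI)
       (use P[where y = a] P[where y = b] in \<open>auto simp: span_add algebra_simps\<close>)
next
  note P = orth_proj_span[where S = "columns X", folded colproj_def]
  fix c :: real and a
  show "colproj X (c *\<^sub>R a) = c *\<^sub>R colproj X a"
    unfolding colproj_def[of X "c *\<^sub>R a"]
    by (rule orth_proj_eqI) (use P[where y = a] in \<open>auto simp: span_scale algebra_simps\<close>)
qed

lemma norm_resid_affine:
  fixes X :: "real^'p^'n"
  assumes "s > 0"
  shows "norm_resid X (X *v beta + s *\<^sub>R e) = norm_resid X e"
proof -
  note P = orth_proj_span[where S = "columns X", folded colproj_def]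
  have "colproj X (X *v beta + s *\<^sub>R e) = X *v beta + s *\<^sub>R colproj X e"
    unfolding colproj_def[of X "X *v beta + s *\<^sub>R e"]
    by (rule orth_proj_eqI)
       (use P[where y = e] matrix_vector_mult_in_columnspace[of X beta]
        in \<open>auto simp: span_add span_scale algebra_simps\<close>)
  then have "X *v beta + s *\<^sub>R e - colproj X (X *v beta + s *\<^sub>R e) = s *\<^sub>R (e - colproj X e)"
    by (simp add: algebra_simps)
  then show ?thesis unfolding norm_resid_def using assms by simp
qed

lemma borel_measurable_vec_lambda:
  fixes g :: "'x \<Rightarrow> 'n::finite \<Rightarrow> real"
  assumes "\<And>i. (\<lambda>v. g v i) \<in> borel_measurable N"
  shows "(\<lambda>v. (\<chi> i. g v i) :: real^'n) \<in> borel_measurable N"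
proof (subst borel_measurable_euclidean_space, intro ballI)
  fix b :: "real^'n" assume "b \<in> Basis"
  then obtain j where "b = axis j 1" by (auto simp: Basis_vec_def)
  then have "(\<lambda>v. (\<chi> i. g v i) \<bullet> b) = (\<lambda>v. g v j)" by (simp add: inner_axis)
  then show "(\<lambda>v. (\<chi> i. g v i) \<bullet> b) \<in> borel_measurable N" using assms by simp
qed

lemma borel_measurable_norm_resid: "norm_resid X \<in> borel_measurable borel"
proof -
  have "colproj X \<in> borel_measurable borel"
    by (intro borel_measurable_continuous_onI linear_continuous_on
        linear_conv_bounded_linear[THEN iffD1] linear_colproj)
  then show ?thesis unfolding norm_resid_def[abs_def] by measurable
qed

subsection \<open>Rank p-values\<close>

definition rank_pvalue :: "nat \<Rightarrow> (nat \<Rightarrow> real) \<Rightarrow> nat \<Rightarrow> real" where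
  "rank_pvalue B a b = (1 + real (card {c \<in> {0..B} - {b}. a b \<le> a c})) / (real B + 1)"

lemma card_rank_pvalue_le:
  assumes "x \<ge> 0"
  shows "real (card {b \<in> {0..B}. rank_pvalue B a b \<le> x}) \<le> x * (real B + 1)"
proof (cases "{b \<in> {0..B}. rank_pvalue B a b \<le> x} = {}")
  case True
  show ?thesis unfolding True using assms by simp
next
  case False
  define S where "S = {b \<in> {0..B}. rank_pvalue B a b \<le> x}"
  have "finite S" unfolding S_def by simp
  with False obtain m where m: "m \<in> S" "a m = Min (a ` S)"
    unfolding S_def[symmetric] by (metis (mono_tags, lifting) Min_in finite_imageI image_iff image_is_empty)
  have "S - {m} \<subseteq> {c \<in> {0..B} - {m}. a m \<le> a c}"
    using m \<open>finite S\<close> unfolding S_def by auto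
  then have "card (S - {m}) \<le> card {c \<in> {0..B} - {m}. a m \<le> a c}"
    by (intro card_mono) auto
  then have "real (card S) \<le> 1 + real (card {c \<in> {0..B} - {m}. a m \<le> a c})"
    using m(1) \<open>finite S\<close> by (simp add: card_Diff_singleton)
  also have "\<dots> \<le> x * (real B + 1)"
    using m(1) unfolding S_def rank_pvalue_def by (simp add: divide_le_eq add_pos_nonneg)
  finally show ?thesis unfolding S_def .
qed

lemma rank_pvalue_permute:
  assumes \<pi>: "\<pi> permutes {0..B}" and "b \<le> B"
    and a': "\<And>c. c \<le> B \<Longrightarrow> a' c = a (\<pi> c)"
  shows "rank_pvalue B a' b = rank_pvalue B a (\<pi> b)"
proof -
  let ?C = "{0..B} - {b}"
  have "bij_betw \<pi> ?C ({0..B} - {\<pi> b})"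
    using permutes_imp_bij[OF \<pi>] \<open>b \<le> B\<close> by (intro bij_betw_DiffI) (auto simp: bij_betw_def)
  then have img: "\<pi> ` ?C = {0..B} - {\<pi> b}" and inj: "inj_on \<pi> ?C"
    by (auto simp: bij_betw_def)
  have "{d \<in> {0..B} - {\<pi> b}. a (\<pi> b) \<le> a d} = \<pi> ` {c \<in> ?C. a' b \<le> a' c}"
    unfolding img[symmetric] using a' \<open>b \<le> B\<close> by auto
  moreover have "inj_on \<pi> {c \<in> ?C. a' b \<le> a' c}"
    using inj by (rule inj_on_subset) auto
  ultimately show ?thesis unfolding rank_pvalue_def by (simp add: card_image)
qed

lemma borel_measurable_rank_pvalue:
  assumes "\<And>c. c \<le> B \<Longrightarrow> h c \<in> borel_measurable N" "b \<le> B"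
  shows "(\<lambda>v. rank_pvalue B (\<lambda>c. h c v) b) \<in> borel_measurable N"
proof -
  have "real (card {c \<in> {0..B} - {b}. h b v \<le> h c v})
      = (\<Sum>c\<in>{0..B} - {b}. if h b v \<le> h c v then 1 else 0)" for v
    by (simp add: sum.If_cases Int_def conj_commute conj_left_commute)
  moreover have "(\<lambda>v. \<Sum>c\<in>{0..B} - {b}. if h b v \<le> h c v then 1 else 0 :: real) \<in> borel_measurable N"
  proof (intro borel_measurable_sum)
    fix c assume "c \<in> {0..B} - {b}"
    then have [measurable]: "h c \<in> borel_measurable N" "h b \<in> borel_measurable N"
      using assms by auto
    show "(\<lambda>v. if h b v \<le> h c v then 1 else 0 :: real) \<in> borel_measurable N" by measurable
  qed
  ultimately show ?thesis unfolding rank_pvalue_def by simp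
qed

subsection \<open>Validity under exchangeability\<close>

lemma (in prob_space) card_mult_prob_le:
  assumes "finite K" "k \<in> K"
    and sets: "\<And>b. b \<in> K \<Longrightarrow> A b \<in> events"
    and equal: "\<And>b. b \<in> K \<Longrightarrow> prob (A b) = prob (A k)"
    and overlap: "\<And>\<omega>. \<omega> \<in> space M \<Longrightarrow> real (card {b \<in> K. \<omega> \<in> A b}) \<le> c"
  shows "real (card K) * prob (A k) \<le> c"
proof -
  have int: "integrable M (indicator (A b) :: _ \<Rightarrow> real)" if "b \<in> K" for b
    using sets[OF that] by (intro integrable_real_indicator) (auto simp: less_top[symmetric])
  have "real (card K) * prob (A k) = (\<Sum>b\<in>K. prob (A b))"
    using equal by simp
  also have "\<dots> = (\<Sum>b\<in>K. expectation (indicator (A b)))"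
    using sets by (simp add: Int_absorb2 sets.sets_into_space)
  also have "\<dots> = expectation (\<lambda>\<omega>. \<Sum>b\<in>K. indicator (A b) \<omega>)"
    using int by (intro Bochner_Integration.integral_sum[symmetric]) auto
  also have "\<dots> \<le> expectation (\<lambda>_. c)"
  proof (rule integral_mono)
    fix \<omega> assume "\<omega> \<in> space M"
    then show "(\<Sum>b\<in>K. indicator (A b) \<omega>) \<le> c"
      using overlap \<open>finite K\<close> by (simp add: indicator_def sum.If_cases Int_def)
  qed (use int in auto)
  also have "\<dots> = c" by (simp add: prob_space)
  finally show ?thesis .
qed

lemma (in prob_space) prob_rank_pvalue_le:
  assumes G: "\<And>c. c \<le> B \<Longrightarrow> G c \<in> borel_measurable M"
    and T: "\<And>b. b \<le> B \<Longrightarrow> T b \<in> M \<rightarrow>\<^sub>M M" "\<And>b. b \<le> B \<Longrightarrow> distr M M (T b) = M"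
    and swap: "\<And>b c \<omega>. b \<le> B \<Longrightarrow> c \<le> B \<Longrightarrow> \<omega> \<in> space M \<Longrightarrow>
      G c (T b \<omega>) = G (Transposition.transpose 0 b c) \<omega>"
    and "x \<ge> 0"
  shows "prob {\<omega> \<in> space M. rank_pvalue B (\<lambda>c. G c \<omega>) 0 \<le> x} \<le> x"
proof -
  define A where "A b = {\<omega> \<in> space M. rank_pvalue B (\<lambda>c. G c \<omega>) b \<le> x}" for b
  have A: "A b \<in> events" if "b \<le> B" for b
  proof -
    have "(\<lambda>\<omega>. rank_pvalue B (\<lambda>c. G c \<omega>) b) \<in> borel_measurable M"
      using G that by (rule borel_measurable_rank_pvalue)
    from measurable_sets[OF this atMost_borel] show ?thesis
      unfolding A_def by (simp add: vimage_def Int_def conj_commute)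
  qed
  have equal: "prob (A b) = prob (A 0)" if "b \<le> B" for b
  proof -
    have t: "Transposition.transpose 0 b permutes {0..B}" using that by (intro permutes_swap_id) auto
    have "rank_pvalue B (\<lambda>c. G c (T b \<omega>)) 0 = rank_pvalue B (\<lambda>c. G c \<omega>) b" if "\<omega> \<in> space M" for \<omega>
      using rank_pvalue_permute[OF t, of 0 "\<lambda>c. G c (T b \<omega>)" "\<lambda>c. G c \<omega>"]
        swap[OF \<open>b \<le> B\<close> _ that] by simp
    then have "A b = T b -` A 0 \<inter> space M"
      using measurable_space[OF T(1)[OF that]] unfolding A_def by auto
    then have "prob (A b) = measure (distr M M (T b)) (A 0)"
      using A[of 0] T(1)[OF that] by (simp add: measure_distr)
    then show ?thesis using T(2)[OF that] by simp
  qed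
  have "real (card {0..B}) * prob (A 0) \<le> x * (real B + 1)"
  proof (rule card_mult_prob_le)
    fix \<omega> assume "\<omega> \<in> space M"
    then have "{b \<in> {0..B}. \<omega> \<in> A b} = {b \<in> {0..B}. rank_pvalue B (\<lambda>c. G c \<omega>) b \<le> x}"
      unfolding A_def by auto
    then show "real (card {b \<in> {0..B}. \<omega> \<in> A b}) \<le> x * (real B + 1)"
      using card_rank_pvalue_le[OF \<open>x \<ge> 0\<close>] by simp
  next
    show "A b \<in> events" if "b \<in> {0..B}" for b using that by (intro A) simp
    show "prob (A b) = prob (A 0)" if "b \<in> {0..B}" for b using that by (intro equal) simp
  qed simp_all
  then have "(real B + 1) * prob (A 0) \<le> (real B + 1) * x"
    by (simp add: algebra_simps)
  then show ?thesis unfolding A_def by simp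
qed

lemma measurable_PiM_permute_blocks:
  assumes "\<pi> permutes K"
  shows "(\<lambda>v. \<lambda>j\<in>K \<times> J. v (\<pi> (fst j), snd j)) \<in> PiM (K \<times> J) (\<lambda>_. D) \<rightarrow>\<^sub>M PiM (K \<times> J) (\<lambda>_. D)"
proof (rule measurable_restrict)
  fix j assume "j \<in> K \<times> J"
  then have "(\<pi> (fst j), snd j) \<in> K \<times> J"
    using permutes_in_image[OF assms] by (auto simp: mem_Times_iff)
  then show "(\<lambda>v. v (\<pi> (fst j), snd j)) \<in> PiM (K \<times> J) (\<lambda>_. D) \<rightarrow>\<^sub>M D"
    by (rule measurable_component_singleton)
qed

lemma distr_PiM_permute_blocks:
  assumes "prob_space D" "\<pi> permutes K"
  shows "distr (PiM (K \<times> J) (\<lambda>_. D)) (PiM (K \<times> J) (\<lambda>_. D)) (\<lambda>v. \<lambda>j\<in>K \<times> J. v (\<pi> (fst j), snd j))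
    = PiM (K \<times> J) (\<lambda>_. D)"
proof -
  let ?g = "\<lambda>j. (\<pi> (fst j), snd j)"
  have "inj_on ?g (K \<times> J)"
    by (rule inj_onI) (auto simp: prod_eq_iff dest: permutes_inj[OF assms(2), THEN injD])
  moreover have "?g \<in> K \<times> J \<rightarrow> K \<times> J"
    using permutes_in_image[OF assms(2)] by (auto simp: mem_Times_iff)
  ultimately show ?thesis
    using distr_PiM_reindex[of "K \<times> J" "\<lambda>_. D" ?g "K \<times> J"] assms(1) by simp
qed

lemma borel_measurable_fix_snd:
  fixes h :: "'a::second_countable_topology \<Rightarrow> 'b::second_countable_topology \<Rightarrow> 'c::topological_space"
  assumes "(\<lambda>z. h (fst z) (snd z)) \<in> borel_measurable borel"
  shows "(\<lambda>r. h r c) \<in> borel_measurable borel"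
proof -
  have "(\<lambda>r. (r, c)) \<in> borel \<rightarrow>\<^sub>M (borel :: ('a \<times> 'b) measure)"
    unfolding borel_prod[symmetric] by measurable
  from measurable_compose[OF this assms] show ?thesis by simp
qed

lemma measure_Collect_distr:
  assumes "V \<in> M \<rightarrow>\<^sub>M N" "distr M N V = N" "{v \<in> space N. P v} \<in> sets N"
  shows "measure M {\<omega> \<in> space M. P (V \<omega>)} = measure N {v \<in> space N. P v}"
proof -
  have "{\<omega> \<in> space M. P (V \<omega>)} = V -` {v \<in> space N. P v} \<inter> space M"
    using measurable_space[OF assms(1)] by auto
  then show ?thesis using measure_distr[OF assms(1,3)] assms(2) by simp
qed

lemma (in prob_space) distr_indep_vars_PiM_density:
  fixes X :: "'i \<Rightarrow> 'a \<Rightarrow> real" and g :: "real \<Rightarrow> ennreal"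
  assumes indep: "indep_vars (\<lambda>_. borel) X I" and "I \<noteq> {}"
    and distributed: "\<And>i. i \<in> I \<Longrightarrow> distributed M lborel (X i) g"
  shows "(\<lambda>\<omega>. \<lambda>i\<in>I. X i \<omega>) \<in> M \<rightarrow>\<^sub>M PiM I (\<lambda>_. density lborel g)"
    and "distr M (PiM I (\<lambda>_. density lborel g)) (\<lambda>\<omega>. \<lambda>i\<in>I. X i \<omega>) = PiM I (\<lambda>_. density lborel g)"
proof -
  have rv: "random_variable borel (X i)" if "i \<in> I" for i
    using indep that unfolding indep_vars_def by blast
  have sets: "sets (PiM I (\<lambda>_. density lborel g)) = sets (PiM I (\<lambda>_. borel :: real measure))"
    by (intro sets_PiM_cong) auto
  show "(\<lambda>\<omega>. \<lambda>i\<in>I. X i \<omega>) \<in> M \<rightarrow>\<^sub>M PiM I (\<lambda>_. density lborel g)"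
    unfolding measurable_cong_sets[OF refl sets] using rv by (intro measurable_restrict)
  have "distr M (PiM I (\<lambda>_. density lborel g)) (\<lambda>\<omega>. \<lambda>i\<in>I. X i \<omega>)
      = distr M (PiM I (\<lambda>_. borel)) (\<lambda>\<omega>. \<lambda>i\<in>I. X i \<omega>)"
    by (rule distr_cong[OF refl sets refl])
  also have "\<dots> = PiM I (\<lambda>i. distr M borel (X i))"
    using indep indep_vars_iff_distr_eq_PiM'[where M' = "\<lambda>_. borel" and X = X, OF \<open>I \<noteq> {}\<close> rv]
    by blast
  also have "\<dots> = PiM I (\<lambda>_. density lborel g)"
  proof (rule PiM_cong[OF refl])
    fix i assume "i \<in> I"
    have "distr M borel (X i) = distr M lborel (X i)" by (rule distr_cong) auto
    then show "distr M borel (X i) = density lborel g"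
      using distributed_distr_eq_density[OF distributed[OF \<open>i \<in> I\<close>]] by simp
  qed
  finally show "distr M (PiM I (\<lambda>_. density lborel g)) (\<lambda>\<omega>. \<lambda>i\<in>I. X i \<omega>) = PiM I (\<lambda>_. density lborel g)" .
qed

subsection \<open>Leave-one-out statistics\<close>

lemma skip_idx_le: "k < B \<Longrightarrow> skip_idx b k \<le> B"
  by (simp add: skip_idx_def)

lemma bij_betw_skip_idx:
  assumes "b \<le> B"
  shows "bij_betw (skip_idx b) {..<B} ({0..B} - {b})"
proof (rule bij_betw_imageI)
  show "inj_on (skip_idx b) {..<B}"
    by (auto simp: inj_on_def skip_idx_def split: if_splits)
  show "skip_idx b ` {..<B} = {0..B} - {b}"
  proof (intro equalityI subsetI)
    fix j assume "j \<in> skip_idx b ` {..<B}"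
    then show "j \<in> {0..B} - {b}" by (auto simp: skip_idx_def)
  next
    fix j assume "j \<in> {0..B} - {b}"
    then have "j = skip_idx b (if j < b then j else j - 1)" "(if j < b then j else j - 1) < B"
      using assms by (auto simp: skip_idx_def)
    then show "j \<in> skip_idx b ` {..<B}" by blast
  qed
qed

lemma skip_idx_permute:
  assumes \<pi>: "\<pi> permutes {0..B}" and "b \<le> B"
  obtains \<rho> where "\<rho> permutes {..<B}" "\<And>k. k < B \<Longrightarrow> skip_idx (\<pi> b) (\<rho> k) = \<pi> (skip_idx b k)"
proof
  have "\<pi> b \<le> B" using permutes_in_image[OF \<pi>] \<open>b \<le> B\<close> by simp
  note skip_\<pi>b = bij_betw_skip_idx[OF this] and skip_b = bij_betw_skip_idx[OF \<open>b \<le> B\<close>]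
  have \<pi>_bij: "bij_betw \<pi> ({0..B} - {b}) ({0..B} - {\<pi> b})"
    using permutes_imp_bij[OF \<pi>] \<open>b \<le> B\<close> by (intro bij_betw_DiffI) (auto simp: bij_betw_def)
  define \<rho> where "\<rho> k = (if k < B then the_inv_into {..<B} (skip_idx (\<pi> b)) (\<pi> (skip_idx b k)) else k)" for k
  have "bij_betw (the_inv_into {..<B} (skip_idx (\<pi> b)) \<circ> \<pi> \<circ> skip_idx b) {..<B} {..<B}"
    by (rule bij_betw_trans[OF skip_b bij_betw_trans[OF \<pi>_bij bij_betw_the_inv_into[OF skip_\<pi>b]]])
  then have "bij_betw \<rho> {..<B} {..<B}"
    using bij_betw_cong[of "{..<B}" \<rho> "the_inv_into {..<B} (skip_idx (\<pi> b)) \<circ> \<pi> \<circ> skip_idx b"]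
    by (simp add: \<rho>_def)
  then show "\<rho> permutes {..<B}"
    by (rule bij_imp_permutes) (simp add: \<rho>_def)
  show "skip_idx (\<pi> b) (\<rho> k) = \<pi> (skip_idx b k)" if "k < B" for k
  proof -
    have "\<pi> (skip_idx b k) \<in> {0..B} - {\<pi> b}"
      using bij_betwE[OF \<pi>_bij] bij_betwE[OF skip_b] that by blast
    then show ?thesis by (simp add: \<rho>_def that f_the_inv_into_f_bij_betw[OF skip_\<pi>b])
  qed
qed

definition loo_stat :: "nat \<Rightarrow> nat \<Rightarrow> (nat \<Rightarrow> 'r \<Rightarrow> real)
    \<Rightarrow> ((nat \<Rightarrow> real) \<Rightarrow> (nat \<Rightarrow> nat \<Rightarrow> real) \<Rightarrow> real) \<Rightarrow> (nat \<Rightarrow> 'r) \<Rightarrow> nat \<Rightarrow> real" where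
  "loo_stat L B g Qt R b = Qt (\<lambda>l\<in>{..<L}. g l (R b)) (\<lambda>l\<in>{..<L}. \<lambda>k\<in>{..<B}. g l (R (skip_idx b k)))"

lemma loo_stat_cong:
  assumes "\<And>c. c \<le> B \<Longrightarrow> R c = R' c" "b \<le> B"
  shows "loo_stat L B g Qt R b = loo_stat L B g Qt R' b"
  unfolding loo_stat_def using assms skip_idx_le
  by (intro arg_cong2[where f = Qt] restrict_ext) auto

lemma loo_stat_permute:
  assumes Qt: "\<And>v Mat \<sigma>. \<sigma> permutes {..<B} \<Longrightarrow>
      Qt v (\<lambda>l\<in>{..<L}. \<lambda>k\<in>{..<B}. Mat l (\<sigma> k)) = Qt v (\<lambda>l\<in>{..<L}. \<lambda>k\<in>{..<B}. Mat l k)"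
    and \<pi>: "\<pi> permutes {0..B}" and "b \<le> B"
    and R': "\<And>c. c \<le> B \<Longrightarrow> R' c = R (\<pi> c)"
  shows "loo_stat L B g Qt R' b = loo_stat L B g Qt R (\<pi> b)"
proof -
  obtain \<rho> where \<rho>: "\<rho> permutes {..<B}" "\<And>k. k < B \<Longrightarrow> skip_idx (\<pi> b) (\<rho> k) = \<pi> (skip_idx b k)"
    using skip_idx_permute[OF \<pi> \<open>b \<le> B\<close>] by blast
  have "(\<lambda>l\<in>{..<L}. \<lambda>k\<in>{..<B}. g l (R' (skip_idx b k)))
      = (\<lambda>l\<in>{..<L}. \<lambda>k\<in>{..<B}. g l (R (skip_idx (\<pi> b) (\<rho> k))))"
    by (intro restrict_ext) (simp add: \<rho>(2) R' skip_idx_le)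
  then show ?thesis
    unfolding loo_stat_def using Qt[OF \<rho>(1)] R'[OF \<open>b \<le> B\<close>] by simp
qed

lemma borel_measurable_loo_stat:
  assumes g: "\<And>l. l < L \<Longrightarrow> g l \<in> borel_measurable borel"
    and Qt: "(\<lambda>z. Qt (fst z) (snd z)) \<in> borel_measurable
      (PiM {..<L} (\<lambda>_. borel) \<Otimes>\<^sub>M PiM {..<L} (\<lambda>_. PiM {..<B} (\<lambda>_. borel)))"
    and R: "\<And>c. c \<le> B \<Longrightarrow> R c \<in> borel_measurable N" and "b \<le> B"
  shows "(\<lambda>\<omega>. loo_stat L B g Qt (\<lambda>c. R c \<omega>) b) \<in> borel_measurable N"
proof -
  have gR: "(\<lambda>\<omega>. g l (R c \<omega>)) \<in> borel_measurable N" if "l < L" "c \<le> B" for l c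
    using measurable_compose[OF R g] that by blast
  have "(\<lambda>\<omega>. \<lambda>l\<in>{..<L}. g l (R b \<omega>)) \<in> N \<rightarrow>\<^sub>M PiM {..<L} (\<lambda>_. borel)"
    by (rule measurable_restrict) (simp add: gR \<open>b \<le> B\<close>)
  moreover have "(\<lambda>\<omega>. \<lambda>l\<in>{..<L}. \<lambda>k\<in>{..<B}. g l (R (skip_idx b k) \<omega>))
      \<in> N \<rightarrow>\<^sub>M PiM {..<L} (\<lambda>_. PiM {..<B} (\<lambda>_. borel))"
    by (rule measurable_restrict, rule measurable_restrict) (simp add: gR skip_idx_le)
  ultimately have "(\<lambda>\<omega>. (\<lambda>l\<in>{..<L}. g l (R b \<omega>), \<lambda>l\<in>{..<L}. \<lambda>k\<in>{..<B}. g l (R (skip_idx b k) \<omega>)))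
      \<in> N \<rightarrow>\<^sub>M PiM {..<L} (\<lambda>_. borel) \<Otimes>\<^sub>M PiM {..<L} (\<lambda>_. PiM {..<B} (\<lambda>_. borel))"
    by (rule measurable_Pair)
  from measurable_compose[OF this Qt] show ?thesis unfolding loo_stat_def by simp
qed

lemma prob_loo_rank_pvalue_le:
  fixes D :: "real measure" and \<Phi> :: "real^'n \<Rightarrow> 'r::topological_space"
  assumes D: "prob_space D" "sets D = sets borel"
    and \<Phi>: "\<Phi> \<in> borel_measurable borel"
    and g: "\<And>l. l < L \<Longrightarrow> g l \<in> borel_measurable borel"
    and Qt_meas: "(\<lambda>z. Qt (fst z) (snd z)) \<in> borel_measurable
      (PiM {..<L} (\<lambda>_. borel) \<Otimes>\<^sub>M PiM {..<L} (\<lambda>_. PiM {..<B} (\<lambda>_. borel)))"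
    and Qt_sym: "\<And>v Mat \<sigma>. \<sigma> permutes {..<B} \<Longrightarrow>
      Qt v (\<lambda>l\<in>{..<L}. \<lambda>k\<in>{..<B}. Mat l (\<sigma> k)) = Qt v (\<lambda>l\<in>{..<L}. \<lambda>k\<in>{..<B}. Mat l k)"
    and "x \<ge> 0"
  defines "N \<equiv> PiM ({0..B} \<times> UNIV) (\<lambda>_. D)"
    and "G \<equiv> \<lambda>c v. loo_stat L B g Qt (\<lambda>c. \<Phi> (\<chi> i. v (c, i))) c"
  shows "{v \<in> space N. rank_pvalue B (\<lambda>c. G c v) 0 \<le> x} \<in> sets N"
    and "measure N {v \<in> space N. rank_pvalue B (\<lambda>c. G c v) 0 \<le> x} \<le> x"
proof -
  let ?I = "{0..B} \<times> (UNIV :: 'n set)" and ?t = "Transposition.transpose 0"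
  define swap :: "nat \<Rightarrow> (nat \<times> 'n \<Rightarrow> real) \<Rightarrow> nat \<times> 'n \<Rightarrow> real"
    where "swap b v = (\<lambda>j\<in>?I. v (?t b (fst j), snd j))" for b v
  interpret N: prob_space N unfolding N_def using D by (intro prob_space_PiM) auto
  have t: "?t b permutes {0..B}" if "b \<le> B" for b
    using that by (intro permutes_swap_id) auto
  have G_meas: "G c \<in> borel_measurable N" if "c \<le> B" for c
  proof -
    have "(\<lambda>v. v (c', i)) \<in> borel_measurable N" if "c' \<le> B" for c' i
      unfolding N_def measurable_cong_sets[OF refl D(2), symmetric]
      using that by (intro measurable_component_singleton) simp
    then have "(\<lambda>v. \<Phi> (\<chi> i. v (c', i))) \<in> borel_measurable N" if "c' \<le> B" for c'
      using that by (intro measurable_compose[OF borel_measurable_vec_lambda \<Phi>])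
    from borel_measurable_loo_stat[OF g Qt_meas this that] show ?thesis
      unfolding G_def by simp
  qed
  then have "(\<lambda>v. rank_pvalue B (\<lambda>c. G c v) 0) \<in> borel_measurable N"
    by (rule borel_measurable_rank_pvalue) simp_all
  from measurable_sets[OF this atMost_borel]
  show "{v \<in> space N. rank_pvalue B (\<lambda>c. G c v) 0 \<le> x} \<in> sets N"
    by (simp add: vimage_def Int_def conj_commute)
  show "measure N {v \<in> space N. rank_pvalue B (\<lambda>c. G c v) 0 \<le> x} \<le> x"
  proof (rule N.prob_rank_pvalue_le[where T = swap])
    show "swap b \<in> N \<rightarrow>\<^sub>M N" if "b \<le> B" for b
      unfolding N_def swap_def by (rule measurable_PiM_permute_blocks[OF t[OF that]])
    show "distr N N (swap b) = N" if "b \<le> B" for b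
      unfolding N_def swap_def by (rule distr_PiM_permute_blocks[OF D(1) t[OF that]])
    show "G c (swap b v) = G (?t b c) v" if "b \<le> B" "c \<le> B" for b c v
      unfolding G_def
      by (rule loo_stat_permute[where Qt = Qt and L = L and B = B, OF Qt_sym t[OF that(1)] that(2)])
        (simp_all add: swap_def)
  qed (simp_all add: G_meas \<open>x \<ge> 0\<close>)
qed

theorem proposition1:
  fixes M :: "'w measure"
    and X :: "real^'p^'n" and Xall :: "real^'q^'n"
    and beta :: "real^'p" and sigma :: real
    and eps :: "'w \<Rightarrow> real^'n" and zeta :: "nat \<Rightarrow> 'w \<Rightarrow> real^'n"
    and B L :: nat
    and f :: "nat \<Rightarrow> real^'n \<Rightarrow> real^'q^'n \<Rightarrow> real"
    and Qt :: "(nat \<Rightarrow> real) \<Rightarrow> (nat \<Rightarrow> nat \<Rightarrow> real) \<Rightarrow> real"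
    and x :: real
  assumes "prob_space M"
    and "CARD('p) < CARD('n)"
    and "sigma > 0"
    and "\<forall>i. distributed M lborel (\<lambda>\<omega>. eps \<omega> $ i) std_normal_density"
    and "\<forall>b\<in>{1..B}. \<forall>i. distributed M lborel (\<lambda>\<omega>. zeta b \<omega> $ i) std_normal_density"
    and "prob_space.indep_vars M (\<lambda>_. borel)
           (\<lambda>(b, i) \<omega>. (if b = 0 then eps \<omega> else zeta b \<omega>) $ i) ({0..B} \<times> UNIV)"
    and "\<forall>l<L. (\<lambda>z. f l (fst z) (snd z)) \<in> borel_measurable borel"
    and "(\<lambda>z. Qt (fst z) (snd z)) \<in> borel_measurable
           (PiM {..<L} (\<lambda>_. borel) \<Otimes>\<^sub>M PiM {..<L} (\<lambda>_. PiM {..<B} (\<lambda>_. borel)))"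
    and "\<forall>v Mat \<pi>. \<pi> permutes {..<B} \<longrightarrow>
           Qt v (\<lambda>l\<in>{..<L}. \<lambda>k\<in>{..<B}. Mat l (\<pi> k)) = Qt v (\<lambda>l\<in>{..<L}. \<lambda>k\<in>{..<B}. Mat l k)"
    and "x \<in> {0..1}"
  shows "let y = (\<lambda>\<omega>. X *v beta + sigma *\<^sub>R eps \<omega>);
             R = (\<lambda>b \<omega>. if b = 0 then norm_resid X (y \<omega>) else norm_resid X (zeta b \<omega>));
             fv = (\<lambda>b \<omega>. \<lambda>l\<in>{..<L}. f l (R b \<omega>) Xall);
             fm = (\<lambda>b \<omega>. \<lambda>l\<in>{..<L}. \<lambda>k\<in>{..<B}. f l (R (skip_idx b k) \<omega>) Xall);
             Qb = (\<lambda>b \<omega>. Qt (fv b \<omega>) (fm b \<omega>));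
             Q = (\<lambda>\<omega>. (1 + real (card {b \<in> {1..B}. Qb b \<omega> \<ge> Qb 0 \<omega>})) / (real B + 1))
         in measure M {\<omega> \<in> space M. Q \<omega> \<le> x} \<le> x"
proof -
  \<comment> \<open>The rank condition on X is not needed: it only makes the residuals nonzero almost surely,
    and a zero residual is harmlessly sent to 0 by the junk value 1 / 0 = 0.\<close>
  interpret prob_space M by fact
  define g where "g l r = f l r Xall" for l r
  define Rs where "Rs b \<omega> = (if b = 0 then norm_resid X (X *v beta + sigma *\<^sub>R eps \<omega>)
    else norm_resid X (zeta b \<omega>))" for b \<omega>
  define Z where "Z = (\<lambda>(b, i) \<omega>. (if b = 0 then eps \<omega> else zeta b \<omega>) $ i)"
  define V where "V \<omega> = (\<lambda>j\<in>{0..B} \<times> UNIV. Z j \<omega>)" for \<omega>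
  define N where "N = PiM ({0..B} \<times> (UNIV :: 'n set)) (\<lambda>_. density lborel std_normal_density)"
  define G where "G c v = loo_stat L B g Qt (\<lambda>c. norm_resid X (\<chi> i. v (c, i))) c" for c v
  have "distributed M lborel (Z (c, i)) std_normal_density" if "c \<le> B" for c i
    using that assms(4,5) by (cases "c = 0") (auto simp: Z_def)
  then have "\<And>j. j \<in> {0..B} \<times> UNIV \<Longrightarrow> distributed M lborel (Z j) std_normal_density"
    by auto
  then have V: "V \<in> M \<rightarrow>\<^sub>M N" and law: "distr M N V = N"
    unfolding N_def V_def using distr_indep_vars_PiM_density[OF assms(6)[folded Z_def]] by auto
  have "prob_space (density lborel std_normal_density)"
    using prob_space_normal_density[of 1 0] by simp
  from prob_loo_rank_pvalue_le[OF this _ borel_measurable_norm_resid[of X] _ assms(8) assms(9)[rule_format],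
      where g = g and x = x, folded N_def]
  have test: "{v \<in> space N. rank_pvalue B (\<lambda>c. G c v) 0 \<le> x} \<in> sets N"
    "measure N {v \<in> space N. rank_pvalue B (\<lambda>c. G c v) 0 \<le> x} \<le> x"
    using assms(7,10) borel_measurable_fix_snd unfolding G_def g_def by auto
  have Q_eq: "(1 + real (card {b \<in> {1..B}. loo_stat L B g Qt (\<lambda>c. Rs c \<omega>) b \<ge> loo_stat L B g Qt (\<lambda>c. Rs c \<omega>) 0}))
      / (real B + 1) = rank_pvalue B (\<lambda>c. G c (V \<omega>)) 0" for \<omega>
  proof -
    have "(\<chi> i. V \<omega> (c, i)) = (if c = 0 then eps \<omega> else zeta c \<omega>)" if "c \<le> B" for c
      using that by (simp add: V_def Z_def vec_eq_iff)
    then have "Rs c \<omega> = norm_resid X (\<chi> i. V \<omega> (c, i))" if "c \<le> B" for c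
      using that by (simp add: Rs_def norm_resid_affine[OF assms(3)])
    then have "loo_stat L B g Qt (\<lambda>c. Rs c \<omega>) c = G c (V \<omega>)" if "c \<le> B" for c
      unfolding G_def using that by (intro loo_stat_cong) auto
    moreover have "{1..B} = {0..B} - {0::nat}" by auto
    ultimately show ?thesis unfolding rank_pvalue_def by (auto intro!: arg_cong[where f = card])
  qed
  have "measure M {\<omega> \<in> space M. rank_pvalue B (\<lambda>c. G c (V \<omega>)) 0 \<le> x} \<le> x"
    using measure_Collect_distr[OF V law test(1)] test(2) by simp
  then show ?thesis
    unfolding Q_eq[symmetric] unfolding Let_def loo_stat_def g_def Rs_def .
qed

end
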